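(* Let $(J,\mathcal F)$ and $w^S_j>0$ be as in the context, and assume $w^S_j\le w^T_j$ whenever $j\in S\subset T$ with $S,T\in\mathcal F$. Let $\mathbf c$ be $\mathcal F$-admissible and let $\mathrm{AG}_2$ on input $\mathbf c$ produce $\boldsymbol\pi$, $\boldsymbol\nu$, $S_k$, $\nu^{S_k}_j$. Then for every $j\in J$, $$\nu_j=\max\{\nu^S_j: j\in S\in\{S_1,\dots,S_n\}\}.$$
   Context: $J$ finite, $|J|=n$; $\mathcal F\subseteq2^J$ with $\emptyset\in\mathcal F$, each nonempty $S\in\mathcal F$ having nonempty $\partial^-S=\{j\in S:S\setminus\{j\}\in\mathcal F\}$, each $S\in\mathcal F\ne J$ having $j\notin S$ with $S\cup\{j\}\in\mathcal F$. Coefficients $w^S_j>0$ for $j\in S\in\mathcal F$. $\mathrm{AG}_2$ on input $\mathbf c$: $S_1=J$, $\nu^{S_1}_j=c_j/w^{S_1}_j$, $\pi_1\in\arg\min\{\nu^{S_1}_j:j\in\partial^-S_1\}$, $\nu_{\pi_1}=\nu^{S_1}_{\pi_1}$; for $k=2..n$: $S_k=S_{k-1}\setminus\{\pi_{k-1}\}$, $\nu^{S_k}_j=\nu^{S_{k-1}}_j+(w^{S_{k-1}}_j/w^{S_k}_j-1)[\nu^{S_{k-1}}_j-\nu^{S_{k-1}}_{\pi_{k-1}}]$ ($j\in S_k$), $\pi_k\in\arg\min\{\nu^{S_k}_j:j\in\partial^-S_k\}$, $\nu_{\pi_k}=\nu^{S_k}_{\pi_k}$. $\mathbf c$ is $\mathcal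 F$-admissible if $\nu_{\pi_1}\le\cdots\le\nu_{\pi_n}$. *)

theory Defs
  imports Complex_Main
begin

definition dminus :: "'a set set \<Rightarrow> 'a set \<Rightarrow> 'a set" where
  "dminus F S = {j \<in> S. S - {j} \<in> F}"

definition set_system :: "'a set \<Rightarrow> 'a set set \<Rightarrow> bool" where
  "set_system J F \<longleftrightarrow> finite J \<and> F \<subseteq> Pow J \<and> {} \<in> F
     \<and> (\<forall>S\<in>F. S \<noteq> {} \<longrightarrow> dminus F S \<noteq> {})
     \<and> (\<forall>S\<in>F. S \<noteq> J \<longrightarrow> (\<exists>j\<in>J - S. insert j S \<in> F))"

definition pos_weights :: "'a set set \<Rightarrow> ('a set \<Rightarrow> 'a \<Rightarrow> real) \<Rightarrow> bool" where
  "pos_weights F w \<longleftrightarrow> (\<forall>S\<in>F. \<forall>j\<in>S. w S j > 0)"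

text \<open>A run of AG_2 on input c (ties in the argmin broken arbitrarily).
  Indices k = 1..n with n = card J.  S k is S_k, nuS k j is nu^{S_k}_j,
  \<pi> k is pi_k; nu_{pi_k} = nuS k (\<pi> k).\<close>
definition AG2_run :: "'a set \<Rightarrow> 'a set set \<Rightarrow> ('a set \<Rightarrow> 'a \<Rightarrow> real) \<Rightarrow> ('a \<Rightarrow> real)
     \<Rightarrow> (nat \<Rightarrow> 'a set) \<Rightarrow> (nat \<Rightarrow> 'a \<Rightarrow> real) \<Rightarrow> (nat \<Rightarrow> 'a) \<Rightarrow> bool" where
  "AG2_run J F w c S nuS \<pi> \<longleftrightarrow>
     S 1 = J
   \<and> (\<forall>j\<in>J. nuS 1 j = c j / w J j)
   \<and> (\<forall>k\<in>{2..card J}. S k = S (k - 1) - {\<pi> (k - 1)}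
        \<and> (\<forall>j\<in>S k. nuS k j = nuS (k - 1) j
              + (w (S (k - 1)) j / w (S k) j - 1) * (nuS (k - 1) j - nuS (k - 1) (\<pi> (k - 1)))))
   \<and> (\<forall>k\<in>{1..card J}. \<pi> k \<in> dminus F (S k)
        \<and> (\<forall>j\<in>dminus F (S k). nuS k (\<pi> k) \<le> nuS k j))"

text \<open>c is F-admissible: nu_{pi_1} <= ... <= nu_{pi_n} along the run.\<close>
definition admissible_run :: "nat \<Rightarrow> (nat \<Rightarrow> 'a \<Rightarrow> real) \<Rightarrow> (nat \<Rightarrow> 'a) \<Rightarrow> bool" where
  "admissible_run n nuS \<pi> \<longleftrightarrow> (\<forall>k\<in>{1..<n}. nuS k (\<pi> k) \<le> nuS (Suc k) (\<pi> (Suc k)))"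

end

theory Submission
  imports Defs
begin

text \<open>One step of AG_2 replaces \<open>\<nu>\<^sub>j\<close> by \<open>\<nu>\<^sub>j + (q - 1) (\<nu>\<^sub>j - \<nu>\<^sub>\<pi>)\<close>, where
  \<open>q = w\<^sup>S\<^sub>j / w\<^sup>S\<^sup>-\<^sup>\<pi>\<^sub>j \<ge> 1\<close> because the weights are nested.  This pushes \<open>\<nu>\<^sub>j\<close> away from
  the threshold \<open>\<nu>\<^sub>\<pi>\<close>, so \<open>\<nu>\<^sub>j\<close> is at most the larger of its updated value and the
  threshold.  Admissibility makes the thresholds nondecreasing, so by backward induction from
  the step \<open>k\<close> at which \<open>j\<close> is removed every earlier \<open>\<nu>\<^sup>S\<^sup>i\<^sub>j\<close> is at most
  \<open>\<nu>\<^sup>S\<^sup>k\<^sub>j\<close>, while \<open>j\<close> lies in no later \<open>S\<^sub>i\<close>.\<close>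

lemma le_bound_of_extrapolation:
  fixes a b m q A :: real
  assumes "1 \<le> q" and "b = a + (q - 1) * (a - m)" and "b \<le> A" and "m \<le> A"
  shows "a \<le> A"
proof (cases "a \<le> m")
  case False
  then have "0 \<le> (q - 1) * (a - m)" using \<open>1 \<le> q\<close> by simp
  then show ?thesis using assms by linarith
qed (use assms in linarith)

lemma set_system_top_in:
  assumes "set_system J F"
  shows "J \<in> F"
proof -
  have "F \<subseteq> Pow J" and "finite J" and "{} \<in> F"
    and grow: "\<forall>S\<in>F. S \<noteq> J \<longrightarrow> (\<exists>j\<in>J - S. insert j S \<in> F)"
    using assms unfolding set_system_def by simp_all
  then have "finite F" and "F \<noteq> {}" by (auto intro: finite_subset)
  then obtain M where "M \<in> F" and maximal: "\<forall>T\<in>F. M \<le> T \<longrightarrow> M = T"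
    using finite_has_maximal by blast
  show ?thesis
  proof (rule ccontr)
    assume "J \<notin> F"
    then obtain j where "j \<notin> M" and "insert j M \<in> F"
      using grow \<open>M \<in> F\<close> by fastforce
    then show False using maximal by blast
  qed
qed

lemma admissible_run_mono:
  assumes "admissible_run n nuS \<pi>" and "1 \<le> i" and "i \<le> k" and "k \<le> n"
  shows "nuS i (\<pi> i) \<le> nuS k (\<pi> k)"
  using \<open>i \<le> k\<close> \<open>k \<le> n\<close>
proof (induction k rule: dec_induct)
  case (step k)
  then have "nuS k (\<pi> k) \<le> nuS (Suc k) (\<pi> (Suc k))"
    using assms(1,2) unfolding admissible_run_def by simp
  with step show ?case by simp
qed simp

locale nested_AG2_run =
  fixes J :: "'a set" and F :: "'a set set" and w :: "'a set \<Rightarrow> 'a \<Rightarrow> real"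
    and c :: "'a \<Rightarrow> real" and S :: "nat \<Rightarrow> 'a set" and nuS :: "nat \<Rightarrow> 'a \<Rightarrow> real"
    and \<pi> :: "nat \<Rightarrow> 'a"
  assumes sys: "set_system J F"
    and wpos: "pos_weights F w"
    and wmono: "\<And>S' T j. S' \<in> F \<Longrightarrow> T \<in> F \<Longrightarrow> S' \<subset> T \<Longrightarrow> j \<in> S' \<Longrightarrow> w S' j \<le> w T j"
    and run: "AG2_run J F w c S nuS \<pi>"
begin

lemma S_one: "S 1 = J"
  using run unfolding AG2_run_def by simp

lemma run_step:
  assumes "1 \<le> i" and "i < card J"
  shows "S (Suc i) = S i - {\<pi> i} \<and> (\<forall>j\<in>S (Suc i). nuS (Suc i) j
      = nuS i j + (w (S i) j / w (S (Suc i)) j - 1) * (nuS i j - nuS i (\<pi> i)))"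
proof -
  have "Suc i \<in> {2..card J}" using assms by simp
  from bspec[OF run[unfolded AG2_run_def, THEN conjunct2, THEN conjunct2, THEN conjunct1] this]
  show ?thesis by simp
qed

lemma S_Suc:
  assumes "1 \<le> i" and "i < card J"
  shows "S (Suc i) = S i - {\<pi> i}"
  using run_step[OF assms] by blast

lemma nuS_Suc:
  assumes "1 \<le> i" and "i < card J" and "j \<in> S (Suc i)"
  shows "nuS (Suc i) j
    = nuS i j + (w (S i) j / w (S (Suc i)) j - 1) * (nuS i j - nuS i (\<pi> i))"
  using run_step[OF assms(1,2)] assms(3) by blast

lemma pi_in_dminus:
  assumes "1 \<le> i" and "i \<le> card J"
  shows "\<pi> i \<in> dminus F (S i)"
  using run assms unfolding AG2_run_def by simp

lemma pi_in_S:
  assumes "1 \<le> i" and "i \<le> card J"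
  shows "\<pi> i \<in> S i"
  using pi_in_dminus[OF assms] unfolding dminus_def by simp

lemma S_in_F:
  assumes "1 \<le> i" and "i \<le> card J"
  shows "S i \<in> F"
  using assms
proof (induction i rule: nat_induct_at_least)
  case base
  show ?case using S_one set_system_top_in[OF sys] by simp
next
  case (Suc i)
  then have "S (Suc i) = S i - {\<pi> i}" and "\<pi> i \<in> dminus F (S i)"
    using S_Suc pi_in_dminus by simp_all
  then show ?case unfolding dminus_def by simp
qed

lemma S_antimono:
  assumes "i \<le> i'" and "i' \<le> card J" and "1 \<le> i"
  shows "S i' \<subseteq> S i"
  using assms(1,2)
proof (induction i' rule: dec_induct)
  case (step i')
  then show ?case using S_Suc[of i'] \<open>1 \<le> i\<close> by auto
qed simp

lemma removed_not_in_S: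
  assumes "1 \<le> k" and "k < i" and "i \<le> card J"
  shows "\<pi> k \<notin> S i"
proof -
  have "S i \<subseteq> S (Suc k)" using S_antimono assms by simp
  then show ?thesis using S_Suc assms by auto
qed

lemma weight_ratio_ge_one:
  assumes "1 \<le> i" and "i < card J" and "j \<in> S (Suc i)"
  shows "1 \<le> w (S i) j / w (S (Suc i)) j"
proof -
  have F: "S (Suc i) \<in> F" "S i \<in> F" using S_in_F assms by simp_all
  have "S (Suc i) \<subset> S i" using S_Suc pi_in_S assms by auto
  then have "w (S (Suc i)) j \<le> w (S i) j" using wmono F assms(3) by blast
  moreover have "0 < w (S (Suc i)) j" using wpos F assms(3) unfolding pos_weights_def by blast
  ultimately show ?thesis by simp
qed

lemma nuS_le_at_removal:
  assumes adm: "admissible_run (card J) nuS \<pi>"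
    and "1 \<le> i" and "i \<le> k" and "k \<le> card J"
  shows "nuS i (\<pi> k) \<le> nuS k (\<pi> k)"
  using \<open>i \<le> k\<close>
proof (induction i rule: inc_induct)
  case (step i')
  have i': "1 \<le> i'" "i' < card J" using step.hyps assms by simp_all
  have "\<pi> k \<in> S (Suc i')"
    using S_antimono[of "Suc i'" k] pi_in_S[of k] step.hyps assms by auto
  moreover have "nuS i' (\<pi> i') \<le> nuS k (\<pi> k)"
    using admissible_run_mono[OF adm] i' step.hyps assms by simp
  ultimately show ?case
    using le_bound_of_extrapolation[OF weight_ratio_ge_one nuS_Suc] i' step.IH by blast
qed simp

end

theorem theorem4:
  fixes J :: "'a set" and F :: "'a set set" and w :: "'a set \<Rightarrow> 'a \<Rightarrow> real"
    and c :: "'a \<Rightarrow> real" and S :: "nat \<Rightarrow> 'a set" and nuS :: "nat \<Rightarrow> 'a \<Rightarrow> real"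
    and \<pi> :: "nat \<Rightarrow> 'a"
  assumes sys: "set_system J F"
    and wpos: "pos_weights F w"
    and wmono: "\<And>S' T j. S' \<in> F \<Longrightarrow> T \<in> F \<Longrightarrow> S' \<subset> T \<Longrightarrow> j \<in> S' \<Longrightarrow> w S' j \<le> w T j"
    and run: "AG2_run J F w c S nuS \<pi>"
    and adm: "admissible_run (card J) nuS \<pi>"
  shows "\<forall>j\<in>J. \<forall>k\<in>{1..card J}. \<pi> k = j \<longrightarrow>
           nuS k j = Max {nuS i j | i. i \<in> {1..card J} \<and> j \<in> S i}"
proof (intro ballI impI)
  interpret nested_AG2_run J F w c S nuS \<pi>
    using sys wpos wmono run by unfold_locales
  fix j k assume "k \<in> {1..card J}" and j: "\<pi> k = j"
  let ?A = "{nuS i j | i. i \<in> {1..card J} \<and> j \<in> S i}"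
  have "nuS k j \<in> ?A" using pi_in_S \<open>k \<in> {1..card J}\<close> j by auto
  moreover have "x \<le> nuS k j" if "x \<in> ?A" for x
  proof -
    obtain i where "x = nuS i j" "i \<in> {1..card J}" "j \<in> S i" using \<open>x \<in> ?A\<close> by auto
    moreover have "i \<le> k"
      using removed_not_in_S[of k i] calculation \<open>k \<in> {1..card J}\<close> j by force
    ultimately show ?thesis
      using nuS_le_at_removal[OF adm] \<open>k \<in> {1..card J}\<close> j by auto
  qed
  ultimately show "nuS k j = Max ?A" by (intro Max_eqI[symmetric]) auto
qed

end
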